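(* Let $\mathfrak{S}=(\mathcal{X},\mathsf{S},\gamma,(\Lambda_{a})_{a\in\mathcal{A}})$ be a spectral decomposition system for the Euclidean space $\mathfrak{H}$. Let $\varphi\colon\mathcal{X}\to\left]-\infty,+\infty\right]$ be a proper $\mathsf{S}$-invariant function, let $\psi\in\Gamma_0(\mathcal{X})$ be an $\mathsf{S}$-invariant Legendre function such that $\operatorname{dom}\varphi\cap\operatorname{dom}\psi\neq\varnothing$, and let $X\in\mathfrak{H}$. Then: (i) $\operatorname{env}_{\varphi\circ\gamma}^{\psi\circ\gamma}(X)=\operatorname{env}_{\varphi}^{\psi}(\gamma(X))$; (ii) for every $Z\in\mathfrak{H}$: $Z\in\operatorname{Prox}_{\varphi\circ\gamma}^{\psi\circ\gamma}X$ if and only if $\gamma(Z)\in\operatorname{Prox}_{\varphi}^{\psi}\gamma(X)$ and there exists $a\in\mathcal{A}$ with $X=\Lambda_a\gamma(X)$ and $Z=\Lambda_a\gamma(Z)$; (iii) for every $z\in\mathcal{X}$ and $a\in\mathcal{A}_X$: $\Lambda_az\in\operatorname{Prox}_{\varphi\circ\gamma}^{\psi\circ\gamma}X$ if and only if $z\in\operatorname{Prox}_{\varphi}^{\psi}\gamma(X)$; (iv) $\operatorname{Prox}_{\varphi\circ\gamma}^{\psi\circ\gamma}X=\{\Lambda_az: z\in\operatorname{Prox}_{\varphi}^{\psi}\gamma(X),\ a\in\mathcal{A}_X\}$; (v) $\operatorname{Prox}_{\varphi\circ\gamma}^{\psi\circ\gamma}X$ is convex if and only if $\operatorname{Prox}_{\varphi}^{\psi}\gamma(X)$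 is convex; (vi) $\operatorname{Prox}_{\varphi\circ\gamma}^{\psi\circ\gamma}X$ is a singleton if and only if $\operatorname{Prox}_{\varphi}^{\psi}\gamma(X)$ is a singleton.
   Context: A Euclidean space is a finite-dimensional real inner product space; inner products are written $\langle\cdot,\cdot\rangle$ and norms $\|\cdot\|$. Let $\mathfrak{H}$ and $\mathcal{X}$ be Euclidean spaces, let $\mathsf{S}$ be a group acting on $\mathcal{X}$ by linear isometries, let $\gamma\colon\mathfrak{H}\to\mathcal{X}$, and let $(\Lambda_a)_{a\in\mathcal{A}}$ be a family of linear operators from $\mathcal{X}$ to $\mathfrak{H}$. The orbit of $x$ is $\mathsf{S}\cdot x=\{s\cdot x: s\in\mathsf{S}\}$; a map $f$ on $\mathcal{X}$ is $\mathsf{S}$-invariant if $f(s\cdot x)=f(x)$ for all $s,x$. The tuple is a spectral decomposition system for $\mathfrak{H}$ if: [A] every $\Lambda_a$ is an isometry; [B] there exists an $\mathsf{S}$-invariant $\tau\colon\mathcal{X}\to\mathcal{X}$ with $\tau(x)\in\mathsf{S}\cdot x$ for all $x$ and $\gamma\circ\Lambda_a=\tau$ for all $a$; [C] for every $X\in\mathfrak{H}$ there is $a$ with $X=\Lambda_a\gamma(X)$; [D] $\langle X,Y\rangle\leq\langle\gamma(X),\gamma(Y)\rangle$ for all $X,Y\in\mathfrak{H}$. For $X\in\mathfrak{H}$, $\mathcal{A}_X=\{a\in\mathcal{A}: X=\Lambda_a\gamma(X)\}$. For functions on a Euclidean space $\mathcal{H}$: $\operatorname{dom}f=\{f<+\infty\}$;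 proper means never $-\infty$ and $\operatorname{dom}f\neq\varnothing$; $\Gamma_0(\mathcal{H})$ is the set of proper lower semicontinuous convex functions $\mathcal{H}\to\left]-\infty,+\infty\right]$; $\partial g(x)=\{u:\langle z-x,u\rangle+g(x)\leq g(z)\ \forall z\}$. A function $g\in\Gamma_0(\mathcal{H})$ is essentially smooth if $\partial g(x)$ has at most one element for every $x$, essentially strictly convex if it is strictly convex on every convex subset of $\{x:\partial g(x)\neq\varnothing\}$, and Legendre if both. ($\psi\circ\gamma$ is a Legendre function on $\mathfrak{H}$ under the stated hypotheses, so the objects below are defined.) For a Legendre $g\in\Gamma_0(\mathcal{H})$, the Bregman distance is $D_g(y,x)=g(y)-g(x)-\langle y-x,\nabla g(x)\rangle$ if $x\in\operatorname{int}\operatorname{dom}g$ and $D_g(y,x)=+\infty$ otherwise. For $f\colon\mathcal{H}\to\left]-\infty,+\infty\right]$ with $\operatorname{dom}f\cap\operatorname{dom}g\neq\varnothing$: $\operatorname{env}_f^g(x)=\inf_{y\in\mathcal{H}}(f(y)+D_g(y,x))$ and $\operatorname{Prox}_f^g x=\operatorname{Argmin}(f+D_g(\cdot,x))$, where $\operatorname{Argmin}h$ is the set of minimizers of $h$ if $\inf h<+\infty$ and $\varnothing$ otherwise. *)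

theory Defs
  imports "HOL-Analysis.Analysis" "HOL-Library.Extended_Real"
begin

text \<open>Extended-real-valued functions with values in ]-infinity,+infinity] are modelled as
  functions into ereal; properness excludes the value -infinity.\<close>

definition edom :: "('a \<Rightarrow> ereal) \<Rightarrow> 'a set" where
  "edom f = {x. f x < \<infinity>}"

definition eproper :: "('a \<Rightarrow> ereal) \<Rightarrow> bool" where
  "eproper f \<longleftrightarrow> (\<forall>x. f x \<noteq> -\<infinity>) \<and> edom f \<noteq> {}"

definition elsc :: "('a::topological_space \<Rightarrow> ereal) \<Rightarrow> bool" where
  "elsc f \<longleftrightarrow> (\<forall>c. closed {x. f x \<le> c})"

definition econvex :: "('a::real_vector \<Rightarrow> ereal) \<Rightarrow> bool" where
  "econvex f \<longleftrightarrow> (\<forall>x y t. 0 < t \<and> t < 1 \<longrightarrow>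
      f ((1 - t) *\<^sub>R x + t *\<^sub>R y) \<le> ereal (1 - t) * f x + ereal t * f y)"

definition Gamma0 :: "('a::real_inner \<Rightarrow> ereal) \<Rightarrow> bool" where
  "Gamma0 f \<longleftrightarrow> eproper f \<and> elsc f \<and> econvex f"

definition subdiff :: "('a::real_inner \<Rightarrow> ereal) \<Rightarrow> 'a \<Rightarrow> 'a set" where
  "subdiff g x = {u. \<forall>z. ereal (inner (z - x) u) + g x \<le> g z}"

definition estrictly_convex_on :: "'a set \<Rightarrow> ('a::real_vector \<Rightarrow> ereal) \<Rightarrow> bool" where
  "estrictly_convex_on C f \<longleftrightarrow> (\<forall>x\<in>C. \<forall>y\<in>C. \<forall>t. x \<noteq> y \<and> 0 < t \<and> t < 1 \<longrightarrow>
      f ((1 - t) *\<^sub>R x + t *\<^sub>R y) < ereal (1 - t) * f x + ereal t * f y)"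

definition essentially_smooth :: "('a::real_inner \<Rightarrow> ereal) \<Rightarrow> bool" where
  "essentially_smooth g \<longleftrightarrow> Gamma0 g \<and> (\<forall>x. \<forall>u\<in>subdiff g x. \<forall>v\<in>subdiff g x. u = v)"

definition essentially_strictly_convex :: "('a::real_inner \<Rightarrow> ereal) \<Rightarrow> bool" where
  "essentially_strictly_convex g \<longleftrightarrow> Gamma0 g \<and>
     (\<forall>C. convex C \<and> C \<subseteq> {x. subdiff g x \<noteq> {}} \<longrightarrow> estrictly_convex_on C g)"

definition Legendre :: "('a::real_inner \<Rightarrow> ereal) \<Rightarrow> bool" where
  "Legendre g \<longleftrightarrow> essentially_smooth g \<and> essentially_strictly_convex g"

text \<open>Gradient of g at a point of int dom g (where a Legendre function is differentiable).\<close>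
definition egrad :: "('a::real_inner \<Rightarrow> ereal) \<Rightarrow> 'a \<Rightarrow> 'a" where
  "egrad g x = (THE u. ((\<lambda>y. real_of_ereal (g y)) has_derivative (\<lambda>h. inner u h)) (at x))"

definition bregman :: "('a::real_inner \<Rightarrow> ereal) \<Rightarrow> 'a \<Rightarrow> 'a \<Rightarrow> ereal" where
  "bregman g y x = (if x \<in> interior (edom g)
      then g y - g x - ereal (inner (y - x) (egrad g x)) else \<infinity>)"

definition env :: "('a::real_inner \<Rightarrow> ereal) \<Rightarrow> ('a \<Rightarrow> ereal) \<Rightarrow> 'a \<Rightarrow> ereal" where
  "env f g x = (INF y. f y + bregman g y x)"

definition Argmin :: "('a \<Rightarrow> ereal) \<Rightarrow> 'a set" where
  "Argmin h = (if (INF y. h y) < \<infinity> then {y. \<forall>z. h y \<le> h z} else {})"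

definition Prox :: "('a::real_inner \<Rightarrow> ereal) \<Rightarrow> ('a \<Rightarrow> ereal) \<Rightarrow> 'a \<Rightarrow> 'a set" where
  "Prox f g x = Argmin (\<lambda>y. f y + bregman g y x)"

text \<open>Group of linear isometries of X (the image of the action of the group S).\<close>
definition linear_isometry_group :: "('x::real_inner \<Rightarrow> 'x) set \<Rightarrow> bool" where
  "linear_isometry_group S \<longleftrightarrow> id \<in> S \<and> (\<forall>f\<in>S. \<forall>g\<in>S. f \<circ> g \<in> S) \<and>
     (\<forall>f\<in>S. linear f \<and> (\<forall>x. norm (f x) = norm x) \<and> (\<exists>g\<in>S. g \<circ> f = id \<and> f \<circ> g = id))"

definition orbit :: "('x \<Rightarrow> 'x) set \<Rightarrow> 'x \<Rightarrow> 'x set" where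
  "orbit S x = {s x | s. s \<in> S}"

definition S_invariant :: "('x \<Rightarrow> 'x) set \<Rightarrow> ('x \<Rightarrow> 'b) \<Rightarrow> bool" where
  "S_invariant S f \<longleftrightarrow> (\<forall>s\<in>S. \<forall>x. f (s x) = f x)"

definition spectral_decomposition_system ::
  "('x::real_inner \<Rightarrow> 'x) set \<Rightarrow> ('h::real_inner \<Rightarrow> 'x) \<Rightarrow> ('a \<Rightarrow> 'x \<Rightarrow> 'h) \<Rightarrow> bool" where
  "spectral_decomposition_system S \<gamma> \<Lambda> \<longleftrightarrow>
     linear_isometry_group S \<and>
     (\<forall>a. linear (\<Lambda> a) \<and> (\<forall>x. norm (\<Lambda> a x) = norm x)) \<and>
     (\<exists>\<tau>. S_invariant S \<tau> \<and> (\<forall>x. \<tau> x \<in> orbit S x) \<and> (\<forall>a. \<gamma> \<circ> \<Lambda> a = \<tau>)) \<and>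
     (\<forall>X. \<exists>a. X = \<Lambda> a (\<gamma> X)) \<and>
     (\<forall>X Y. inner X Y \<le> inner (\<gamma> X) (\<gamma> Y))"

definition Aset :: "('h \<Rightarrow> 'x) \<Rightarrow> ('a \<Rightarrow> 'x \<Rightarrow> 'h) \<Rightarrow> 'h \<Rightarrow> 'a set" where
  "Aset \<gamma> \<Lambda> X = {a. X = \<Lambda> a (\<gamma> X)}"

end

(* Write objective y = phi y + D_psi(y, gamma X) and lifted_objective Y = phi (gamma Y) +
   D_(psi o gamma)(Y, X).  If gamma X lies in int dom psi, the gradient Grad of psi o gamma at X
   is Lambda_a grad, with grad the gradient of psi at gamma X, for every a in A_X.  By
   S-invariance of phi and psi and the inequality <Y, Grad> <= <gamma Y, gamma Grad> =
   <gamma Y, grad>, the lifted objective dominates objective o gamma, with equality at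
   Y = Lambda_a z; this gives (i), (iii) and (iv).  A minimizer Z of the lifted objective attains
   <Z, Grad> = <gamma Z, gamma Grad>, so Z and Grad are decomposed by a common Lambda_b, and
   strict convexity of psi forces X = Lambda_b (gamma X): this is (ii).  For (v), gamma maps a
   convex combination of minimizers into the convex hull of an orbit, and the face of that hull
   exposed by grad consists of minimizers of the objective.  For (vi), every minimizer Z has norm
   |gamma Z|, and a sphere contains no nontrivial segment.  If gamma X is not in int dom psi, then
   X is not in int dom (psi o gamma) and both Bregman distances are identically +infinity. *)

theory Submission
  imports Defs
begin

section \<open>Subgradients of extended-real-valued convex functions\<close>

lemma edom_finite: "x \<in> edom f \<Longrightarrow> f x \<noteq> -\<infinity> \<Longrightarrow> f x = ereal (real_of_ereal (f x))"
  by (cases "f x") (auto simp: edom_def)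

lemma ereal_add_diff_le_add_diff_iff:
  fixes A B :: ereal
  assumes "A \<noteq> -\<infinity>" "B \<noteq> -\<infinity>"
  shows "A + (B - ereal q) \<le> A + (B - ereal p) \<longleftrightarrow> p \<le> q \<or> A = \<infinity> \<or> B = \<infinity>"
  using assms by (cases A; cases B) auto

lemma econvexD_real:
  assumes "econvex f" "0 < t" "t < 1" "f x = ereal a" "f y = ereal b"
  shows "f ((1 - t) *\<^sub>R x + t *\<^sub>R y) \<le> ereal ((1 - t) * a + t * b)"
  using assms unfolding econvex_def by (metis times_ereal.simps(1) plus_ereal.simps(1))

lemma convex_edom:
  assumes "econvex f" "\<And>x. f x \<noteq> -\<infinity>"
  shows "convex (edom f)"
proof (rule convexI)
  fix x y and u v :: real
  assume xy: "x \<in> edom f" "y \<in> edom f" and uv: "0 \<le> u" "0 \<le> v" "u + v = 1"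
  show "u *\<^sub>R x + v *\<^sub>R y \<in> edom f"
  proof (cases "v = 0 \<or> v = 1")
    case True
    then show ?thesis using xy uv by auto
  next
    case False
    then have "0 < v" "v < 1" "u = 1 - v" using uv by auto
    with econvexD_real[OF assms(1) \<open>0 < v\<close> \<open>v < 1\<close> edom_finite[OF xy(1) assms(2)]
        edom_finite[OF xy(2) assms(2)]]
    show ?thesis unfolding edom_def by (auto intro: le_less_trans)
  qed
qed

lemma convex_on_real_of_ereal:
  assumes "econvex f" "\<And>x. f x \<noteq> -\<infinity>" "convex U" "U \<subseteq> edom f"
  shows "convex_on U (\<lambda>y. real_of_ereal (f y))"
proof (rule convex_onI)
  fix t :: real and x y
  assume t: "0 < t" "t < 1" and xy: "x \<in> U" "y \<in> U"
  have "f ((1 - t) *\<^sub>R x + t *\<^sub>R y) \<le> ereal ((1 - t) * real_of_ereal (f x) + t * real_of_ereal (f y))"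
    using xy assms by (intro econvexD_real[OF assms(1) t] edom_finite) auto
  then show "real_of_ereal (f ((1 - t) *\<^sub>R x + t *\<^sub>R y))
      \<le> (1 - t) * real_of_ereal (f x) + t * real_of_ereal (f y)"
    using assms(2) by (cases "f ((1 - t) *\<^sub>R x + t *\<^sub>R y)") auto
qed (fact)

lemma subdiffD_real:
  assumes "u \<in> subdiff f y" "f y = ereal a" "f z = ereal b"
  shows "inner (z - y) u + a \<le> b"
proof -
  have "ereal (inner (z - y) u) + f y \<le> f z" using assms(1) unfolding subdiff_def by blast
  then show ?thesis using assms(2,3) by simp
qed

lemma convex_subdiff: "convex (subdiff f x)"
proof (cases "f x")
  case (real c)
  show ?thesis
  proof (rule convexI)
    fix u v and s t :: real
    assume uv: "u \<in> subdiff f x" "v \<in> subdiff f x" and st: "0 \<le> s" "0 \<le> t" "s + t = 1"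
    show "s *\<^sub>R u + t *\<^sub>R v \<in> subdiff f x"
      unfolding subdiff_def
    proof safe
      fix z
      show "ereal (inner (z - x) (s *\<^sub>R u + t *\<^sub>R v)) + f x \<le> f z"
      proof (cases "f z")
        case (real b)
        have "s * (inner (z - x) u + c) + t * (inner (z - x) v + c) \<le> s * b + t * b"
          using subdiffD_real[OF uv(1) \<open>f x = ereal c\<close> real]
            subdiffD_real[OF uv(2) \<open>f x = ereal c\<close> real] st
          by (intro add_mono mult_left_mono) auto
        moreover have t: "t = 1 - s" using st by simp
        ultimately show ?thesis
          using real \<open>f x = ereal c\<close> unfolding t by (simp add: inner_add_right algebra_simps)
      next
        case MInf
        have "ereal (inner (z - x) u) + f x \<le> f z" using uv(1) unfolding subdiff_def by blast
        then show ?thesis using MInf \<open>f x = ereal c\<close> by simp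
      qed simp
    qed
  qed
next
  case PInf
  then have "subdiff f x = {} \<or> subdiff f x = UNIV" unfolding subdiff_def by auto
  then show ?thesis by auto
next
  case MInf
  then have "subdiff f x = UNIV" unfolding subdiff_def by auto
  then show ?thesis by simp
qed

lemma convex_strict_epigraph:
  assumes "econvex f" "\<And>x. f x \<noteq> -\<infinity>"
  shows "convex {p. f (fst p) < ereal (snd p)}"
proof (rule convexI)
  fix p q :: "'a \<times> real" and u v :: real
  assume p: "p \<in> {p. f (fst p) < ereal (snd p)}" and q: "q \<in> {p. f (fst p) < ereal (snd p)}"
    and uv: "0 \<le> u" "0 \<le> v" "u + v = 1"
  show "u *\<^sub>R p + v *\<^sub>R q \<in> {p. f (fst p) < ereal (snd p)}"
  proof (cases "v = 0 \<or> v = 1")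
    case True
    then show ?thesis using p q uv by auto
  next
    case False
    then have v: "0 < v" "v < 1" and u: "u = 1 - v" using uv by auto
    obtain a b where ab: "f (fst p) = ereal a" "f (fst q) = ereal b" "a < snd p" "b < snd q"
      using p q assms(2) by (cases "f (fst p)"; cases "f (fst q)") auto
    have "f ((1 - v) *\<^sub>R fst p + v *\<^sub>R fst q) \<le> ereal ((1 - v) * a + v * b)"
      by (rule econvexD_real[OF assms(1) v ab(1,2)])
    also have "(1 - v) * a + v * b < (1 - v) * snd p + v * snd q"
      using ab(3,4) v by (intro add_strict_mono mult_strict_left_mono) auto
    finally show ?thesis using u by simp
  qed
qed

text \<open>The supporting hyperplane cannot be vertical (\<open>c = 0\<close>) because \<open>x\<close> is interior to the
  domain.\<close>

lemma subgradient_of_supporting_hyperplane: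
  assumes fx: "f x = ereal r" and xi: "x \<in> interior (edom f)" and nz: "(u, c) \<noteq> 0"
    and below: "inner u x + c * r \<le> b"
    and above: "\<And>y t. f y < ereal t \<Longrightarrow> b \<le> inner u y + c * t"
  shows "- (1 / c) *\<^sub>R u \<in> subdiff f x"
proof -
  have "b \<le> inner u x + c * (r + 1)" using above[of x "r + 1"] fx by simp
  with below have "c \<ge> 0" by (simp add: algebra_simps)
  moreover have "c \<noteq> 0"
  proof
    assume c: "c = 0"
    with nz have "u \<noteq> 0" by (simp add: zero_prod_def)
    obtain e where e: "e > 0" "ball x e \<subseteq> edom f" using xi mem_interior by blast
    define y where "y = x - (e / (2 * norm u)) *\<^sub>R u"
    have "dist x y < e" using e \<open>u \<noteq> 0\<close> by (simp add: y_def dist_norm)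
    then have "f y < \<infinity>" using e(2) unfolding edom_def by (auto simp: subset_iff)
    then obtain t where "f y < ereal t" using ereal_dense2 by blast
    from above[OF this] below c have "inner u x \<le> inner u y" by simp
    moreover have "inner u y = inner u x - e / (2 * norm u) * inner u u"
      by (simp add: y_def inner_diff_right)
    moreover have "e / (2 * norm u) * inner u u > 0" using e(1) \<open>u \<noteq> 0\<close> by simp
    ultimately show False by linarith
  qed
  ultimately have c: "c > 0" by simp
  show ?thesis
    unfolding subdiff_def
  proof safe
    fix z
    show "ereal (inner (z - x) (- (1 / c) *\<^sub>R u)) + f x \<le> f z"
    proof (cases "f z")
      case (real s)
      have "b \<le> inner u z + c * s + e" if "e > 0" for e
        using above[of z "s + e / c"] real c that by (simp add: algebra_simps)
      then have "inner u x + c * r \<le> inner u z + c * s"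
        using below by (meson field_le_epsilon order_trans)
      then have "inner (z - x) (- (1 / c) *\<^sub>R u) \<le> s - r"
        using c by (simp add: inner_diff_right inner_commute field_simps)
      then show ?thesis using real fx by simp
    next
      case MInf
      have "b \<le> inner u z + c * ((b - inner u z) / c - 1)"
        using above[of z "(b - inner u z) / c - 1"] MInf by simp
      moreover have "c * ((b - inner u z) / c - 1) = b - inner u z - c"
        using c by (simp add: field_simps)
      ultimately show ?thesis using c by simp
    qed simp
  qed
qed

lemma subdiff_nonempty_interior:
  fixes f :: "'a::euclidean_space \<Rightarrow> ereal"
  assumes "econvex f" "\<And>x. f x \<noteq> -\<infinity>" and xi: "x \<in> interior (edom f)"
  shows "subdiff f x \<noteq> {}"
proof -
  obtain r where fx: "f x = ereal r"
    using edom_finite[OF subsetD[OF interior_subset xi] assms(2)] by blast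
  let ?E = "{p. f (fst p) < ereal (snd p)}"
  have "(x, r + 1) \<in> ?E" using fx by simp
  moreover have "{(x, r)} \<inter> ?E = {}" using fx by auto
  ultimately obtain a b where "a \<noteq> 0" "\<forall>p\<in>{(x, r)}. inner a p \<le> b" "\<forall>p\<in>?E. b \<le> inner a p"
    using separating_hyperplane_sets[OF _ convex_strict_epigraph[OF assms(1,2)]] by blast
  moreover obtain u c where "a = (u, c)" by fastforce
  ultimately have "- (1 / c) *\<^sub>R u \<in> subdiff f x"
    by (intro subgradient_of_supporting_hyperplane[OF fx xi, of u c b]) auto
  then show ?thesis by blast
qed

lemma norm_subgradient_le:
  assumes u: "u \<in> subdiff f y" and fy: "f y = ereal a" and "\<rho> > 0"
    and bound: "\<And>z. dist z y < \<rho> \<Longrightarrow> f z \<le> ereal (a + M)"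
  shows "norm u \<le> 2 * M / \<rho>"
proof (cases "u = 0")
  case True
  have "M \<ge> 0" using bound[of y] fy \<open>\<rho> > 0\<close> by simp
  then show ?thesis using True \<open>\<rho> > 0\<close> by simp
next
  case False
  define z where "z = y + (\<rho> / (2 * norm u)) *\<^sub>R u"
  have "dist z y < \<rho>" using \<open>\<rho> > 0\<close> False by (simp add: z_def dist_norm)
  moreover have "ereal (inner (z - y) u) + f y \<le> f z" using u unfolding subdiff_def by blast
  ultimately have "ereal (inner (z - y) u) + f y \<le> ereal (a + M)"
    using bound order_trans by blast
  moreover have "inner (z - y) u = \<rho> / 2 * norm u"
    using False by (simp add: z_def power2_norm_eq_inner[symmetric] power2_eq_square)
  ultimately have "\<rho> / 2 * norm u \<le> M" using fy by simp
  then show ?thesis using \<open>\<rho> > 0\<close> by (simp add: field_simps)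
qed

lemma locally_bounded_subdiff:
  fixes f :: "'a::euclidean_space \<Rightarrow> ereal"
  assumes cf: "econvex f" and nm: "\<And>x. f x \<noteq> -\<infinity>" and xi: "x \<in> interior (edom f)"
  obtains r K where "r > 0" "ball x r \<subseteq> interior (edom f)"
    "\<And>y. y \<in> ball x r \<Longrightarrow> \<exists>u\<in>subdiff f y. norm u \<le> K"
proof -
  define U where "U = interior (edom f)"
  define fr where "fr = (\<lambda>y. real_of_ereal (f y))"
  have fin: "f y = ereal (fr y)" if "y \<in> U" for y
    using edom_finite[of y f] nm that interior_subset unfolding U_def fr_def by blast
  have "convex_on U fr"
    unfolding fr_def U_def
    by (intro convex_on_real_of_ereal cf nm convex_interior convex_edom interior_subset)
  then have "isCont fr x"
    using xi convex_on_continuous continuous_on_eq_continuous_at unfolding U_def by blast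
  then obtain d where "d > 0" and d: "\<And>y. dist y x < d \<Longrightarrow> dist (fr y) (fr x) < 1"
    unfolding continuous_at_eps_delta by (meson zero_less_one)
  obtain e where "e > 0" "ball x e \<subseteq> U" using xi open_contains_ball unfolding U_def by blast
  define R where "R = min d e"
  have R: "R > 0" "ball x R \<subseteq> U" using \<open>d > 0\<close> \<open>e > 0\<close> \<open>ball x e \<subseteq> U\<close>
    unfolding R_def by auto
  have osc: "\<bar>fr y - fr x\<bar> < 1" if "y \<in> ball x R" for y
    using d[of y] that unfolding R_def by (simp add: dist_norm norm_minus_commute)
  show ?thesis
  proof
    show "R / 2 > 0" "ball x (R / 2) \<subseteq> interior (edom f)"
      using R unfolding U_def by auto
  next
    fix y assume y: "y \<in> ball x (R / 2)"
    then have yU: "y \<in> U" using R by auto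
    then obtain u where u: "u \<in> subdiff f y"
      using subdiff_nonempty_interior[OF cf nm] unfolding U_def by blast
    have "f z \<le> ereal (fr y + 2)" if "dist z y < R / 2" for z
    proof -
      have "z \<in> ball x R" "y \<in> ball x R" using y that dist_triangle[of x z y] R(1)
        by (auto simp: dist_commute)
      then have "f z = ereal (fr z)" "\<bar>fr z - fr x\<bar> < 1" "\<bar>fr y - fr x\<bar> < 1"
        using fin R(2) osc by auto
      then show ?thesis by simp
    qed
    then have "norm u \<le> 2 * 2 / (R / 2)"
      by (intro norm_subgradient_le[OF u fin[OF yU]]) (use R in auto)
    then show "\<exists>u\<in>subdiff f y. norm u \<le> 8 / R" using u by auto
  qed
qed

lemma subdiff_limit:
  assumes G: "G \<in> subdiff f x" and fx: "f x = ereal a"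
    and U: "\<And>n. U n \<in> subdiff f (Y n)" and fin: "\<And>n. f (Y n) \<noteq> \<infinity>"
    and Y: "Y \<longlonglongrightarrow> x" and l: "U \<longlonglongrightarrow> l"
  shows "l \<in> subdiff f x"
  unfolding subdiff_def
proof safe
  fix z
  have lower: "ereal (inner (y - x) G) + f x \<le> f y" for y using G unfolding subdiff_def by blast
  show "ereal (inner (z - x) l) + f x \<le> f z"
  proof (cases "f z")
    case (real b)
    have "inner (z - Y n) (U n) + (inner (Y n - x) G + a) \<le> b" for n
    proof -
      obtain c where c: "f (Y n) = ereal c" using lower[of "Y n"] fin[of n] fx by (cases "f (Y n)") auto
      have "inner (Y n - x) G + a \<le> c" using lower[of "Y n"] fx c by simp
      moreover have "inner (z - Y n) (U n) + c \<le> b" by (rule subdiffD_real[OF U c real])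
      ultimately show ?thesis by simp
    qed
    moreover have "(\<lambda>n. inner (z - Y n) (U n) + (inner (Y n - x) G + a))
        \<longlonglongrightarrow> inner (z - x) l + (inner (x - x) G + a)"
      by (intro tendsto_intros Y l)
    ultimately have "inner (z - x) l + a \<le> b"
      using LIMSEQ_le_const2 by fastforce
    then show ?thesis using real fx by simp
  next
    case MInf
    then show ?thesis using lower[of z] fx by simp
  qed simp
qed

lemma subgradients_converge:
  fixes f :: "'a::euclidean_space \<Rightarrow> ereal"
  assumes "r > 0" and fin: "\<And>y. y \<in> ball x r \<Longrightarrow> \<bar>f y\<bar> \<noteq> \<infinity>"
    and sub: "subdiff f x = {G}" and "e > 0"
  obtains \<delta> where "\<delta> > 0" "\<delta> \<le> r"
    "\<And>y u. norm (y - x) < \<delta> \<Longrightarrow> u \<in> subdiff f y \<Longrightarrow> norm u \<le> K \<Longrightarrow> norm (u - G) < e"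
proof (rule ccontr)
  assume "\<not> thesis"
  then have "\<forall>n. \<exists>y u. norm (y - x) < min r (inverse (Suc n)) \<and> u \<in> subdiff f y
      \<and> norm u \<le> K \<and> e \<le> norm (u - G)"
    using that \<open>r > 0\<close> by (metis min.cobounded1 inverse_positive_iff_positive min_less_iff_conj
        of_nat_0_less_iff zero_less_Suc not_less)
  then obtain Y U where YU: "\<And>n. norm (Y n - x) < min r (inverse (Suc n))"
    "\<And>n. U n \<in> subdiff f (Y n)" "\<And>n. norm (U n) \<le> K" "\<And>n. e \<le> norm (U n - G)"
    by metis
  have "(\<lambda>n. Y n - x) \<longlonglongrightarrow> 0"
    by (rule Lim_null_comparison[OF always_eventually LIMSEQ_inverse_real_of_nat])
      (use YU(1) in \<open>simp add: less_imp_le\<close>)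
  then have Y: "Y \<longlonglongrightarrow> x" by (rule LIM_zero_cancel)
  obtain l \<rho> where "strict_mono \<rho>" and l: "(U \<circ> \<rho>) \<longlonglongrightarrow> l"
    using compact_cball[of 0 K] YU(3) unfolding compact_def by (metis mem_cball_0)
  have fx: "f x = ereal (real_of_ereal (f x))" using fin[of x] \<open>r > 0\<close> by (simp add: ereal_real')
  have fY: "f (Y n) \<noteq> \<infinity>" for n
    using fin[of "Y n"] YU(1)[of n] by (auto simp: dist_norm norm_minus_commute)
  have "l \<in> subdiff f x"
    using sub YU(2) fY
    by (intro subdiff_limit[where f = f and x = x, OF _ fx _ _ LIMSEQ_subseq_LIMSEQ[OF Y] l])
      (auto intro: \<open>strict_mono \<rho>\<close>)
  then have "l = G" using sub by blast
  moreover have "(\<lambda>n. norm ((U \<circ> \<rho>) n - G)) \<longlonglongrightarrow> norm (l - G)" by (intro tendsto_intros l)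
  then have "e \<le> norm (l - G)" by (rule LIMSEQ_le_const) (use YU(4) in auto)
  ultimately show False using \<open>e > 0\<close> by simp
qed

lemma has_derivative_unique_subgradient:
  fixes f :: "'a::euclidean_space \<Rightarrow> ereal"
  assumes r: "r > 0" and fin: "\<And>y. y \<in> ball x r \<Longrightarrow> \<bar>f y\<bar> \<noteq> \<infinity>"
    and bounded: "\<And>y. y \<in> ball x r \<Longrightarrow> \<exists>u\<in>subdiff f y. norm u \<le> K"
    and sub: "subdiff f x = {G}"
  shows "((\<lambda>y. real_of_ereal (f y)) has_derivative inner G) (at x)"
  unfolding has_derivative_at_alt
proof (intro conjI allI impI)
  show "bounded_linear (inner G)" by (rule bounded_linear_inner_right)
next
  define fr where "fr = (\<lambda>y. real_of_ereal (f y))"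
  have fr: "f y = ereal (fr y)" if "y \<in> ball x r" for y
    using fin[OF that] by (simp add: fr_def ereal_real')
  fix e :: real assume "e > 0"
  obtain \<delta> where \<delta>: "\<delta> > 0" "\<delta> \<le> r"
    and close: "\<And>y u. norm (y - x) < \<delta> \<Longrightarrow> u \<in> subdiff f y \<Longrightarrow> norm u \<le> K \<Longrightarrow> norm (u - G) < e"
    using subgradients_converge[OF r fin sub \<open>e > 0\<close>] by blast
  show "\<exists>d>0. \<forall>y. norm (y - x) < d \<longrightarrow>
      norm (fr y - fr x - inner G (y - x)) \<le> e * norm (y - x)"
  proof (intro exI[of _ \<delta>] conjI allI impI \<delta>(1))
    fix y assume y: "norm (y - x) < \<delta>"
    then have yb: "y \<in> ball x r" using \<delta> by (simp add: dist_norm norm_minus_commute)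
    obtain u where u: "u \<in> subdiff f y" "norm u \<le> K" using bounded[OF yb] by blast
    have G: "G \<in> subdiff f x" using sub by simp
    have "fr y - fr x - inner G (y - x) \<le> inner (y - x) (u - G)"
      using subdiffD_real[OF u(1) fr[OF yb] fr[of x]] r
      by (simp add: inner_diff_left inner_diff_right inner_commute)
    also have "\<dots> \<le> norm (y - x) * norm (u - G)" by (rule norm_cauchy_schwarz)
    also have "\<dots> \<le> e * norm (y - x)"
      using close[OF y u] mult_right_mono[of "norm (u - G)" e "norm (y - x)"]
      by (simp add: mult.commute)
    finally show "norm (fr y - fr x - inner G (y - x)) \<le> e * norm (y - x)"
      using subdiffD_real[OF G fr[of x] fr[OF yb]] r by (simp add: inner_commute)
  qed
qed

lemma egrad_eqI:
  assumes "((\<lambda>y. real_of_ereal (f y)) has_derivative inner G) (at x)"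
  shows "egrad f x = G"
  unfolding egrad_def
proof (rule the_equality)
  fix u assume "((\<lambda>y. real_of_ereal (f y)) has_derivative (\<lambda>h. inner u h)) (at x)"
  from has_derivative_unique[OF this assms] have "inner u (u - G) = inner G (u - G)" by metis
  then have "inner (u - G) (u - G) = 0" by (simp add: inner_diff_left)
  then show "u = G" by simp
qed (use assms in simp)

lemma Legendre_subdiff_interior:
  fixes f :: "'a::euclidean_space \<Rightarrow> ereal"
  assumes L: "Legendre f" and xi: "x \<in> interior (edom f)"
  shows "subdiff f x = {egrad f x}"
proof -
  have cf: "econvex f" and nm: "\<And>y. f y \<noteq> -\<infinity>"
    using L unfolding Legendre_def essentially_smooth_def Gamma0_def eproper_def by auto
  obtain g where g: "g \<in> subdiff f x" using subdiff_nonempty_interior[OF cf nm xi] by blast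
  then have sub: "subdiff f x = {g}"
    using L unfolding Legendre_def essentially_smooth_def by blast
  obtain r K where "r > 0" and ball: "ball x r \<subseteq> interior (edom f)"
    and bounded: "\<And>y. y \<in> ball x r \<Longrightarrow> \<exists>u\<in>subdiff f y. norm u \<le> K"
    using locally_bounded_subdiff[OF cf nm xi] by blast
  have "\<bar>f y\<bar> \<noteq> \<infinity>" if "y \<in> ball x r" for y
    using subsetD[OF ball that] nm[of y] interior_subset[of "edom f"] unfolding edom_def by auto
  then have "egrad f x = g"
    by (intro egrad_eqI has_derivative_unique_subgradient[OF \<open>r > 0\<close> _ bounded sub])
  then show ?thesis using sub by simp
qed

lemma subdiff_level_segment:
  assumes cf: "econvex f" and gx: "g \<in> subdiff f x" and gy: "g \<in> subdiff f y"
    and fx: "f x = ereal c" and fy: "f y = ereal c" and w: "w \<in> closed_segment x y"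
  shows "f w = ereal c" and "g \<in> subdiff f w"
proof -
  obtain t where t: "0 \<le> t" "t \<le> 1" and w: "w = (1 - t) *\<^sub>R x + t *\<^sub>R y"
    using w unfolding closed_segment_def by blast
  have "inner (y - x) g \<le> 0" "inner (x - y) g \<le> 0"
    using subdiffD_real[OF gx fx fy] subdiffD_real[OF gy fy fx] by auto
  then have "inner (y - x) g = 0" by (simp add: inner_diff_left)
  then have flat: "inner (z - w) g = inner (z - x) g" for z
    by (simp add: w inner_diff_left inner_add_left algebra_simps)
  have "f w \<le> ereal c"
  proof (cases "t = 0 \<or> t = 1")
    case True
    then show ?thesis using fx fy w by auto
  next
    case False
    then have "0 < t" "t < 1" using t by auto
    from econvexD_real[OF cf this fx fy] show ?thesis by (simp add: w algebra_simps)
  qed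
  moreover have "ereal (inner (w - x) g) + f x \<le> f w" using gx unfolding subdiff_def by blast
  ultimately show fw: "f w = ereal c" using flat[of w] fx by simp
  show "g \<in> subdiff f w"
    using gx unfolding subdiff_def by (simp add: flat fw fx)
qed

lemma Legendre_level_subgradient_eq:
  assumes L: "Legendre f" and gx: "g \<in> subdiff f x" and gy: "g \<in> subdiff f y"
    and fx: "f x = ereal c" and fy: "f y = ereal c"
  shows "x = y"
proof (rule ccontr)
  assume "x \<noteq> y"
  have cf: "econvex f" and esc: "essentially_strictly_convex f"
    using L unfolding Legendre_def essentially_smooth_def Gamma0_def by auto
  have "closed_segment x y \<subseteq> {z. subdiff f z \<noteq> {}}"
    using subdiff_level_segment(2)[OF cf gx gy fx fy] by blast
  then have "estrictly_convex_on (closed_segment x y) f"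
    using esc unfolding essentially_strictly_convex_def by (simp add: convex_closed_segment)
  moreover have "x \<in> closed_segment x y" "y \<in> closed_segment x y" by auto
  ultimately have "f ((1 - 1/2) *\<^sub>R x + (1/2) *\<^sub>R y) < ereal (1 - 1/2) * f x + ereal (1/2) * f y"
    using \<open>x \<noteq> y\<close> unfolding estrictly_convex_on_def by (elim ballE allE[of _ "1/2"]) auto
  moreover have "(1 - 1/2) *\<^sub>R x + (1/2) *\<^sub>R y \<in> closed_segment x y"
    unfolding closed_segment_def by (intro CollectI exI[of _ "1/2"]) simp
  ultimately show False using subdiff_level_segment(1)[OF cf gx gy fx fy] fx fy by simp
qed

section \<open>Spectral decomposition systems\<close>

lemma inner_self_nonpos_iff: "inner x x \<le> 0 \<longleftrightarrow> x = 0"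
  by (metis inner_gt_zero_iff inner_zero_left not_le order_refl)

lemma linear_isometry_inner:
  assumes "linear f" "\<And>x. norm (f x) = norm x"
  shows "inner (f x) (f y) = inner x y"
  using assms by (simp add: dot_norm linear_add[OF assms(1), symmetric])

lemma norm_midpoint_eq_imp_eq:
  fixes a b :: "'a::real_inner"
  assumes "norm a = r" "norm b = r" "norm ((1/2) *\<^sub>R (a + b)) = r"
  shows "a = b"
proof -
  have "norm (a + b) = norm a + norm b" using assms by simp
  then have "norm a *\<^sub>R b = norm b *\<^sub>R a" using norm_triangle_eq by blast
  then show ?thesis using assms by (cases "r = 0") auto
qed

lemma convex_hull_supporting_hyperplane:
  assumes v: "v \<in> convex hull P" and le: "\<And>p. p \<in> P \<Longrightarrow> inner p g \<le> c" and ge: "c \<le> inner v g"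
  shows "v \<in> convex hull {p \<in> P. inner p g = c}"
proof -
  obtain T u where T: "finite T" "T \<subseteq> P" "\<And>x. x \<in> T \<Longrightarrow> 0 \<le> u x" "sum u T = 1"
      "(\<Sum>x\<in>T. u x *\<^sub>R x) = v"
    using v unfolding convex_hull_explicit by blast
  have nonneg: "0 \<le> u x * (c - inner x g)" if "x \<in> T" for x
    using T(2,3) le that by auto
  have "inner v g = (\<Sum>x\<in>T. u x * inner x g)" "(\<Sum>x\<in>T. u x * c) = c"
    using T(4,5) by (auto simp: inner_sum_left sum_distrib_right[symmetric])
  then have "(\<Sum>x\<in>T. u x * (c - inner x g)) = c - inner v g"
    by (simp add: right_diff_distrib sum_subtractf)
  then have "(\<Sum>x\<in>T. u x * (c - inner x g)) = 0"
    using ge sum_nonneg[of T "\<lambda>x. u x * (c - inner x g)"] nonneg by fastforce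
  then have slack: "u x * (c - inner x g) = 0" if "x \<in> T" for x
    using sum_nonneg_eq_0_iff[OF T(1), of "\<lambda>x. u x * (c - inner x g)"] nonneg that by blast
  let ?T = "{x \<in> T. u x \<noteq> 0}"
  have "?T \<subseteq> {p \<in> P. inner p g = c}" using T(2) slack by auto
  moreover have "sum u ?T = sum u T" "(\<Sum>x\<in>?T. u x *\<^sub>R x) = (\<Sum>x\<in>T. u x *\<^sub>R x)"
    by (rule sum.mono_neutral_left[OF T(1)]; auto)+
  ultimately show ?thesis
    unfolding convex_hull_explicit using T by (intro CollectI exI[of _ ?T] exI[of _ u]) auto
qed

locale spectral_decomposition =
  fixes S :: "('x::euclidean_space \<Rightarrow> 'x) set" and \<gamma> :: "'h::euclidean_space \<Rightarrow> 'x"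
    and \<Lambda> :: "'i \<Rightarrow> 'x \<Rightarrow> 'h"
  assumes sds: "spectral_decomposition_system S \<gamma> \<Lambda>"
begin

lemma S_linear: "s \<in> S \<Longrightarrow> linear s"
  and S_norm: "s \<in> S \<Longrightarrow> norm (s z) = norm z"
  and S_comp: "s \<in> S \<Longrightarrow> t \<in> S \<Longrightarrow> s \<circ> t \<in> S"
  using sds unfolding spectral_decomposition_system_def linear_isometry_group_def by blast+

lemma S_inner: "s \<in> S \<Longrightarrow> inner (s u) (s v) = inner u v"
  by (rule linear_isometry_inner[OF S_linear S_norm])

lemma S_inverse:
  assumes "s \<in> S"
  obtains s' where "s' \<in> S" "\<And>z. s' (s z) = z" "\<And>z. s (s' z) = z"
  using assms sds unfolding spectral_decomposition_system_def linear_isometry_group_def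
  by (metis comp_apply id_apply)

lemma Lambda_linear: "linear (\<Lambda> a)"
  and Lambda_norm: "norm (\<Lambda> a z) = norm z"
  and decomposition: "\<exists>a. X = \<Lambda> a (\<gamma> X)"
  and inner_le_inner_gamma: "inner X Y \<le> inner (\<gamma> X) (\<gamma> Y)"
  using sds unfolding spectral_decomposition_system_def by blast+

lemma Lambda_inner: "inner (\<Lambda> a u) (\<Lambda> a v) = inner u v"
  by (rule linear_isometry_inner[OF Lambda_linear Lambda_norm])

lemma Lambda_diff: "\<Lambda> a u - \<Lambda> a v = \<Lambda> a (u - v)"
  by (simp add: linear_diff[OF Lambda_linear])

lemma Lambda_eq_iff: "\<Lambda> a u = \<Lambda> a v \<longleftrightarrow> u = v"
  by (metis Lambda_diff Lambda_norm eq_iff_diff_eq_0 norm_eq_zero)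

lemma gamma_Lambda_eq_tau:
  obtains \<tau> where "S_invariant S \<tau>" "\<And>x. \<tau> x \<in> orbit S x" "\<And>a z. \<gamma> (\<Lambda> a z) = \<tau> z"
  using sds unfolding spectral_decomposition_system_def by (metis comp_apply)

lemma gamma_Lambda_in_orbit: "\<exists>s\<in>S. \<gamma> (\<Lambda> a z) = s z"
  by (rule gamma_Lambda_eq_tau) (simp add: orbit_def, blast)

lemma gamma_Lambda_S: "s \<in> S \<Longrightarrow> \<gamma> (\<Lambda> a (s z)) = \<gamma> (\<Lambda> a z)"
  by (rule gamma_Lambda_eq_tau) (simp add: S_invariant_def)

lemma gamma_Lambda_indep: "\<gamma> (\<Lambda> a z) = \<gamma> (\<Lambda> b z)"
  by (rule gamma_Lambda_eq_tau) simp

lemma S_invariant_gamma_Lambda: "S_invariant S f \<Longrightarrow> f (\<gamma> (\<Lambda> a z)) = f z"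
  using gamma_Lambda_in_orbit[of a z] unfolding S_invariant_def by force

lemma norm_gamma: "norm (\<gamma> X) = norm X"
  using decomposition[of X] Lambda_norm by metis

lemma gamma_Lambda_gamma: "\<gamma> (\<Lambda> a (\<gamma> X)) = \<gamma> X"
  using decomposition[of X] gamma_Lambda_indep by metis

lemma inner_S_gamma_le: "s \<in> S \<Longrightarrow> inner (s (\<gamma> Y)) (\<gamma> Z) \<le> inner (\<gamma> Y) (\<gamma> Z)"
  using inner_le_inner_gamma[of "\<Lambda> a (s (\<gamma> Y))" "\<Lambda> a (\<gamma> Z)"]
  by (simp add: Lambda_inner gamma_Lambda_S gamma_Lambda_gamma)

lemma gamma_nonexpansive: "norm (\<gamma> X - \<gamma> Y) \<le> norm (X - Y)"
proof -
  have sq: "inner (\<gamma> Z) (\<gamma> Z) = inner Z Z" for Z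
    using norm_gamma[of Z] by (metis power2_norm_eq_inner)
  have "(norm (\<gamma> X - \<gamma> Y))\<^sup>2 = inner X X + inner Y Y - 2 * inner (\<gamma> X) (\<gamma> Y)"
    by (simp add: power2_norm_eq_inner inner_diff_left inner_diff_right inner_commute sq)
  also have "\<dots> \<le> inner X X + inner Y Y - 2 * inner X Y"
    using inner_le_inner_gamma[of X Y] by simp
  also have "\<dots> = (norm (X - Y))\<^sup>2"
    by (simp add: power2_norm_eq_inner inner_diff_left inner_diff_right inner_commute)
  finally show ?thesis by (rule power2_le_imp_le) simp
qed

lemma continuous_on_gamma_Lambda: "continuous_on A (\<lambda>z. \<gamma> (\<Lambda> a z))"
proof -
  have "1-lipschitz_on A (\<lambda>z. \<gamma> (\<Lambda> a z))"
  proof (rule lipschitz_onI)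
    fix x y
    show "dist (\<gamma> (\<Lambda> a x)) (\<gamma> (\<Lambda> a y)) \<le> 1 * dist x y"
      using gamma_nonexpansive[of "\<Lambda> a x" "\<Lambda> a y"] by (simp add: dist_norm Lambda_diff Lambda_norm)
  qed simp
  then show ?thesis by (rule lipschitz_on_continuous_on)
qed

lemma orbit_eq_fibre: "orbit S w = {p. \<gamma> (\<Lambda> a p) = \<gamma> (\<Lambda> a w)}"
proof safe
  fix p assume "\<gamma> (\<Lambda> a p) = \<gamma> (\<Lambda> a w)"
  moreover obtain s1 s2 where "s1 \<in> S" "\<gamma> (\<Lambda> a p) = s1 p" "s2 \<in> S" "\<gamma> (\<Lambda> a w) = s2 w"
    using gamma_Lambda_in_orbit by metis
  moreover obtain s1' where "s1' \<in> S" "\<And>z. s1' (s1 z) = z" using S_inverse[OF \<open>s1 \<in> S\<close>] by metis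
  ultimately have "p = (s1' \<circ> s2) w" "s1' \<circ> s2 \<in> S" using S_comp by (metis comp_apply)+
  then show "p \<in> orbit S w" unfolding orbit_def by blast
qed (auto simp: orbit_def gamma_Lambda_S)

lemma compact_orbit: "compact (orbit S w)"
proof -
  have "closed (orbit S w)"
    unfolding orbit_eq_fibre[of _ undefined]
    by (intro closed_Collect_eq continuous_on_gamma_Lambda continuous_on_const)
  moreover have "bounded (orbit S w)"
    unfolding bounded_iff orbit_def using S_norm by auto
  ultimately show ?thesis by (simp add: compact_eq_bounded_closed)
qed

lemma gamma_convex_combination_in_hull:
  assumes t: "0 \<le> t" "t \<le> 1"
  shows "\<gamma> ((1 - t) *\<^sub>R Y1 + t *\<^sub>R Y2) \<in> convex hull (orbit S ((1 - t) *\<^sub>R \<gamma> Y1 + t *\<^sub>R \<gamma> Y2))"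
    (is "\<gamma> ?M \<in> convex hull (orbit S ?w)")
proof (rule ccontr)
  assume "\<gamma> ?M \<notin> convex hull (orbit S ?w)"
  then obtain a b where ab: "inner a (\<gamma> ?M) < b" "\<And>p. p \<in> convex hull (orbit S ?w) \<Longrightarrow> b < inner a p"
    using separating_hyperplane_closed_point[OF convex_convex_hull]
      compact_imp_closed[OF compact_convex_hull[OF compact_orbit]] by metis
  obtain c where c: "?M = \<Lambda> c (\<gamma> ?M)" using decomposition by blast
  obtain s where s: "s \<in> S" "\<gamma> (\<Lambda> c (- a)) = s (- a)" using gamma_Lambda_in_orbit by blast
  obtain s' where s': "s' \<in> S" "\<And>z. s' (s z) = z" using S_inverse[OF s(1)] by metis
  have "inner (\<gamma> ?M) (- a) = inner ?M (\<Lambda> c (- a))" by (subst c) (simp only: Lambda_inner)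
  also have "\<dots> = (1 - t) * inner Y1 (\<Lambda> c (- a)) + t * inner Y2 (\<Lambda> c (- a))"
    by (simp add: inner_add_left)
  also have "\<dots> \<le> (1 - t) * inner (\<gamma> Y1) (s (- a)) + t * inner (\<gamma> Y2) (s (- a))"
    using inner_le_inner_gamma[of Y1 "\<Lambda> c (- a)"] inner_le_inner_gamma[of Y2 "\<Lambda> c (- a)"] s(2) t
    by (intro add_mono mult_left_mono) auto
  also have "\<dots> = inner ?w (s (- a))" by (simp add: inner_add_left)
  also have "\<dots> = inner (s' ?w) (- a)" using S_inner[OF s'(1), of ?w "s (- a)"] s'(2) by simp
  finally have "inner a (s' ?w) \<le> inner a (\<gamma> ?M)" by (simp add: inner_commute)
  moreover have "s' ?w \<in> convex hull (orbit S ?w)"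
    using s'(1) by (intro hull_inc) (auto simp: orbit_def)
  ultimately show False using ab by fastforce
qed

lemma gamma_add_if_inner_eq:
  assumes eq: "inner X Y = inner (\<gamma> X) (\<gamma> Y)"
  shows "\<gamma> (X + Y) = \<gamma> X + \<gamma> Y"
proof -
  define d where "d = \<gamma> (X + Y) - (\<gamma> X + \<gamma> Y)"
  have sq: "inner (\<gamma> Z) (\<gamma> Z) = inner Z Z" for Z
    using norm_gamma[of Z] by (metis power2_norm_eq_inner)
  have "inner d d = inner (\<gamma> (X + Y)) (\<gamma> (X + Y)) - 2 * inner (\<gamma> (X + Y)) (\<gamma> X)
      - 2 * inner (\<gamma> (X + Y)) (\<gamma> Y) + inner (\<gamma> X) (\<gamma> X) + 2 * inner (\<gamma> X) (\<gamma> Y)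
      + inner (\<gamma> Y) (\<gamma> Y)"
    unfolding d_def by (simp add: inner_add_left inner_add_right inner_diff_left inner_diff_right
        inner_commute algebra_simps)
  also have "\<dots> \<le> inner (X + Y) (X + Y) - 2 * inner (X + Y) X - 2 * inner (X + Y) Y
      + inner X X + 2 * inner X Y + inner Y Y"
    using inner_le_inner_gamma[of "X + Y" X] inner_le_inner_gamma[of "X + Y" Y] eq sq by simp
  also have "\<dots> = 0" by (simp add: inner_add_left inner_add_right inner_commute)
  finally show ?thesis by (simp add: inner_self_nonpos_iff d_def)
qed

lemma decomposition_of_sum:
  assumes sum: "X + Y = \<Lambda> a (\<gamma> X) + \<Lambda> a (\<gamma> Y)" and eq: "inner X Y = inner (\<gamma> X) (\<gamma> Y)"
  shows "X = \<Lambda> a (\<gamma> X)"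
proof -
  let ?A = "\<Lambda> a (\<gamma> X)" and ?B = "\<Lambda> a (\<gamma> Y)"
  have "inner X ?B \<le> inner X Y"
    using inner_le_inner_gamma[of X ?B] eq by (simp add: gamma_Lambda_gamma)
  moreover have "inner X ?A = inner X X + inner X Y - inner X ?B"
    using arg_cong[OF sum, of "\<lambda>Z. inner X (Z - ?B)"] by (simp add: inner_add_right inner_diff_right)
  moreover have "inner ?A ?A = inner X X"
    using norm_gamma[of X] by (simp add: Lambda_inner) (metis power2_norm_eq_inner)
  ultimately have "inner (X - ?A) (X - ?A) \<le> 0"
    by (simp add: inner_diff_left inner_diff_right inner_commute)
  then show ?thesis by (simp add: inner_self_nonpos_iff)
qed

lemma simultaneous_decomposition:
  assumes eq: "inner X Y = inner (\<gamma> X) (\<gamma> Y)"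
  shows "\<exists>a. X = \<Lambda> a (\<gamma> X) \<and> Y = \<Lambda> a (\<gamma> Y)"
proof -
  obtain a where "X + Y = \<Lambda> a (\<gamma> (X + Y))" using decomposition by blast
  then have sum: "X + Y = \<Lambda> a (\<gamma> X) + \<Lambda> a (\<gamma> Y)"
    by (simp add: gamma_add_if_inner_eq[OF eq] linear_add[OF Lambda_linear])
  have "X = \<Lambda> a (\<gamma> X)" by (rule decomposition_of_sum[OF sum eq])
  moreover have "Y = \<Lambda> a (\<gamma> Y)"
    using sum eq by (intro decomposition_of_sum[of Y X a]) (simp_all add: add.commute inner_commute)
  ultimately show ?thesis by blast
qed

lemma subdiff_comp_gamma_Lambda:
  assumes inv: "S_invariant S \<psi>" and u: "u \<in> subdiff \<psi> (\<gamma> Y)" and b: "Y = \<Lambda> b (\<gamma> Y)"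
  shows "\<Lambda> b u \<in> subdiff (\<psi> \<circ> \<gamma>) Y"
  unfolding subdiff_def
proof safe
  fix Z
  obtain s where s: "s \<in> S" "\<gamma> (\<Lambda> b u) = s u" using gamma_Lambda_in_orbit by blast
  obtain s' where s': "s' \<in> S" "\<And>z. s' (s z) = z" using S_inverse[OF s(1)] by metis
  have "inner Z (\<Lambda> b u) \<le> inner (s' (\<gamma> Z)) u"
    using inner_le_inner_gamma[of Z "\<Lambda> b u"] S_inner[OF s'(1), of "\<gamma> Z" "s u"] s s'(2) by simp
  moreover have "inner Y (\<Lambda> b u) = inner (\<gamma> Y) u" by (subst (1) b) (rule Lambda_inner)
  ultimately have "ereal (inner (Z - Y) (\<Lambda> b u)) + \<psi> (\<gamma> Y)
      \<le> ereal (inner (s' (\<gamma> Z) - \<gamma> Y) u) + \<psi> (\<gamma> Y)"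
    by (intro add_right_mono) (simp add: inner_diff_left)
  also have "\<dots> \<le> \<psi> (s' (\<gamma> Z))" using u unfolding subdiff_def by blast
  also have "\<dots> = \<psi> (\<gamma> Z)" using inv s'(1) unfolding S_invariant_def by blast
  finally show "ereal (inner (Z - Y) (\<Lambda> b u)) + (\<psi> \<circ> \<gamma>) Y \<le> (\<psi> \<circ> \<gamma>) Z" by simp
qed

lemma gamma_subdiff_comp:
  assumes inv: "S_invariant S \<psi>" and G: "G \<in> subdiff (\<psi> \<circ> \<gamma>) X"
  shows "\<gamma> G \<in> subdiff \<psi> (\<gamma> X)"
  unfolding subdiff_def
proof safe
  fix y
  obtain c where c: "G = \<Lambda> c (\<gamma> G)" using decomposition by blast
  have "inner (\<Lambda> c y) G = inner y (\<gamma> G)" by (subst (1) c) (rule Lambda_inner)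
  then have "ereal (inner (y - \<gamma> X) (\<gamma> G)) + \<psi> (\<gamma> X) \<le> ereal (inner (\<Lambda> c y - X) G) + \<psi> (\<gamma> X)"
    using inner_le_inner_gamma[of X G] by (intro add_right_mono) (simp add: inner_diff_left)
  also have "\<dots> \<le> \<psi> (\<gamma> (\<Lambda> c y))" using G unfolding subdiff_def by auto
  also have "\<dots> = \<psi> y" by (rule S_invariant_gamma_Lambda[OF inv])
  finally show "ereal (inner (y - \<gamma> X) (\<gamma> G)) + \<psi> (\<gamma> X) \<le> \<psi> y" .
qed

lemma interior_edom_comp_iff:
  assumes inv: "S_invariant S \<psi>"
  shows "X \<in> interior (edom (\<psi> \<circ> \<gamma>)) \<longleftrightarrow> \<gamma> X \<in> interior (edom \<psi>)"
proof
  assume "X \<in> interior (edom (\<psi> \<circ> \<gamma>))"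
  then obtain e where "e > 0" and e: "ball X e \<subseteq> edom (\<psi> \<circ> \<gamma>)" using mem_interior by blast
  obtain a where a: "X = \<Lambda> a (\<gamma> X)" using decomposition by blast
  have "ball (\<gamma> X) e \<subseteq> edom \<psi>"
  proof
    fix y assume "y \<in> ball (\<gamma> X) e"
    then have "\<Lambda> a y \<in> ball X e"
      by (subst a) (simp add: dist_norm Lambda_diff Lambda_norm)
    then show "y \<in> edom \<psi>"
      using e S_invariant_gamma_Lambda[OF inv] unfolding edom_def by auto
  qed
  then show "\<gamma> X \<in> interior (edom \<psi>)" using \<open>e > 0\<close> mem_interior by blast
next
  assume "\<gamma> X \<in> interior (edom \<psi>)"
  then obtain e where "e > 0" and e: "ball (\<gamma> X) e \<subseteq> edom \<psi>" using mem_interior by blast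
  have "ball X e \<subseteq> edom (\<psi> \<circ> \<gamma>)"
  proof
    fix Y assume "Y \<in> ball X e"
    then have "\<gamma> Y \<in> ball (\<gamma> X) e"
      using gamma_nonexpansive[of X Y] by (simp add: dist_norm)
    then show "Y \<in> edom (\<psi> \<circ> \<gamma>)" using e unfolding edom_def by auto
  qed
  then show "X \<in> interior (edom (\<psi> \<circ> \<gamma>))" using \<open>e > 0\<close> mem_interior by blast
qed

end

section \<open>Bregman envelopes and proximity operators\<close>

locale spectral_prox = spectral_decomposition S \<gamma> \<Lambda>
  for S :: "('x::euclidean_space \<Rightarrow> 'x) set" and \<gamma> :: "'h::euclidean_space \<Rightarrow> 'x"
    and \<Lambda> :: "'i \<Rightarrow> 'x \<Rightarrow> 'h" +
  fixes \<phi> \<psi> :: "'x \<Rightarrow> ereal"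
  assumes phi_proper: "eproper \<phi>" and phi_inv: "S_invariant S \<phi>"
    and psi_inv: "S_invariant S \<psi>" and psi_Legendre: "Legendre \<psi>"
begin

lemma phi_not_MInf: "\<phi> y \<noteq> -\<infinity>"
  using phi_proper unfolding eproper_def by blast

lemma psi_not_MInf: "\<psi> y \<noteq> -\<infinity>"
  and psi_econvex: "econvex \<psi>"
  using psi_Legendre unfolding Legendre_def essentially_smooth_def Gamma0_def eproper_def by blast+

lemma subdiff_comp_gamma:
  assumes xi: "\<gamma> X \<in> interior (edom \<psi>)" and a: "X = \<Lambda> a (\<gamma> X)"
  shows "subdiff (\<psi> \<circ> \<gamma>) X = {\<Lambda> a (egrad \<psi> (\<gamma> X))}"
proof -
  let ?g = "egrad \<psi> (\<gamma> X)"
  have sub: "subdiff \<psi> (\<gamma> X) = {?g}" by (rule Legendre_subdiff_interior[OF psi_Legendre xi])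
  have norm_sub: "norm G = norm ?g" if "G \<in> subdiff (\<psi> \<circ> \<gamma>) X" for G
    using gamma_subdiff_comp[OF psi_inv that] sub norm_gamma[of G] by simp
  have lift: "\<Lambda> a ?g \<in> subdiff (\<psi> \<circ> \<gamma>) X"
    using subdiff_comp_gamma_Lambda[OF psi_inv _ a] sub by simp
  have "G = \<Lambda> a ?g" if G: "G \<in> subdiff (\<psi> \<circ> \<gamma>) X" for G
  proof (rule norm_midpoint_eq_imp_eq)
    have "(1/2) *\<^sub>R (G + \<Lambda> a ?g) \<in> subdiff (\<psi> \<circ> \<gamma>) X"
      using convexD[OF convex_subdiff G lift, of "1/2" "1/2"] by (simp add: scaleR_add_right)
    then show "norm ((1/2) *\<^sub>R (G + \<Lambda> a ?g)) = norm ?g" by (rule norm_sub)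
  qed (use norm_sub[OF G] norm_sub[OF lift] in auto)
  then show ?thesis using lift by blast
qed

text \<open>The composite \<open>\<psi> \<circ> \<gamma>\<close> is not known to be convex here; its differentiability comes from
  the subgradients of \<open>\<psi>\<close>, lifted through \<open>\<Lambda>\<close> with the same norm.\<close>

lemma egrad_comp_gamma:
  assumes xi: "\<gamma> X \<in> interior (edom \<psi>)" and a: "X = \<Lambda> a (\<gamma> X)"
  shows "egrad (\<psi> \<circ> \<gamma>) X = \<Lambda> a (egrad \<psi> (\<gamma> X))"
proof -
  obtain r K where "r > 0" and ball: "ball (\<gamma> X) r \<subseteq> interior (edom \<psi>)"
    and bounded: "\<And>y. y \<in> ball (\<gamma> X) r \<Longrightarrow> \<exists>u\<in>subdiff \<psi> y. norm u \<le> K"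
    using locally_bounded_subdiff[OF psi_econvex psi_not_MInf xi] by blast
  have near: "\<gamma> Y \<in> ball (\<gamma> X) r" if "Y \<in> ball X r" for Y
    using that gamma_nonexpansive[of X Y] by (simp add: dist_norm)
  have "\<bar>(\<psi> \<circ> \<gamma>) Y\<bar> \<noteq> \<infinity>" if "Y \<in> ball X r" for Y
    using subsetD[OF ball near[OF that]] interior_subset[of "edom \<psi>"] psi_not_MInf
    unfolding edom_def by auto
  moreover have "\<exists>U\<in>subdiff (\<psi> \<circ> \<gamma>) Y. norm U \<le> K" if Y: "Y \<in> ball X r" for Y
  proof -
    obtain u where u: "u \<in> subdiff \<psi> (\<gamma> Y)" "norm u \<le> K" using bounded[OF near[OF Y]] by blast
    obtain b where "Y = \<Lambda> b (\<gamma> Y)" using decomposition by blast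
    then show ?thesis using subdiff_comp_gamma_Lambda[OF psi_inv u(1)] u(2) Lambda_norm by metis
  qed
  ultimately show ?thesis
    by (intro egrad_eqI has_derivative_unique_subgradient[OF \<open>r > 0\<close>] subdiff_comp_gamma[OF xi a])
qed

end

locale spectral_prox_at = spectral_prox +
  fixes X :: "'h::euclidean_space"
  assumes gamma_X_interior: "\<gamma> X \<in> interior (edom \<psi>)"
begin

abbreviation "grad \<equiv> egrad \<psi> (\<gamma> X)"
abbreviation "Grad \<equiv> egrad (\<psi> \<circ> \<gamma>) X"
abbreviation "objective y \<equiv> \<phi> y + bregman \<psi> y (\<gamma> X)"
abbreviation "lifted_objective Y \<equiv> (\<phi> \<circ> \<gamma>) Y + bregman (\<psi> \<circ> \<gamma>) Y X"

lemma Grad_eq: "X = \<Lambda> a (\<gamma> X) \<Longrightarrow> Grad = \<Lambda> a grad"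
  by (rule egrad_comp_gamma[OF gamma_X_interior])

lemma gamma_Grad: "\<gamma> Grad = grad"
proof -
  obtain a where a: "X = \<Lambda> a (\<gamma> X)" using decomposition by blast
  have "Grad \<in> subdiff (\<psi> \<circ> \<gamma>) X" using subdiff_comp_gamma[OF gamma_X_interior a] Grad_eq[OF a] by simp
  from gamma_subdiff_comp[OF psi_inv this] show ?thesis
    using Legendre_subdiff_interior[OF psi_Legendre gamma_X_interior] by simp
qed

lemma inner_X_Grad: "inner X Grad = inner (\<gamma> X) grad"
  using decomposition[of X] Grad_eq Lambda_inner by metis

lemma inner_Grad_le: "inner Y Grad \<le> inner (\<gamma> Y) grad"
  using inner_le_inner_gamma[of Y Grad] gamma_Grad by simp

lemma psi_gamma_X_not_MInf: "\<psi> (\<gamma> X) \<noteq> -\<infinity>" and psi_gamma_X_not_PInf: "\<psi> (\<gamma> X) \<noteq> \<infinity>"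
  using psi_not_MInf interior_subset[of "edom \<psi>"] gamma_X_interior unfolding edom_def by auto

lemma objective_eq: "objective y = \<phi> y + (\<psi> y - \<psi> (\<gamma> X) - ereal (inner (y - \<gamma> X) grad))"
  using gamma_X_interior by (simp add: bregman_def)

lemma lifted_objective_eq:
  "lifted_objective Y = \<phi> (\<gamma> Y) + (\<psi> (\<gamma> Y) - \<psi> (\<gamma> X) - ereal (inner (Y - X) Grad))"
  using interior_edom_comp_iff[OF psi_inv] gamma_X_interior by (simp add: bregman_def)

lemma psi_diff_not_MInf: "\<psi> y - \<psi> (\<gamma> X) \<noteq> -\<infinity>"
  using psi_not_MInf[of y] psi_gamma_X_not_PInf by (cases "\<psi> y"; cases "\<psi> (\<gamma> X)") auto

lemma inner_diff_Grad:
  "inner (Y - X) Grad = inner (\<gamma> Y - \<gamma> X) grad - (inner (\<gamma> Y) grad - inner Y Grad)"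
  using inner_X_Grad by (simp add: inner_diff_left)

lemma objective_gamma_le: "objective (\<gamma> Y) \<le> lifted_objective Y"
  unfolding objective_eq lifted_objective_eq
  using ereal_add_diff_le_add_diff_iff[OF phi_not_MInf psi_diff_not_MInf] inner_diff_Grad[of Y]
    inner_Grad_le[of Y] by simp

lemma lifted_objective_eq_if_inner_eq:
  "inner Y Grad = inner (\<gamma> Y) grad \<Longrightarrow> lifted_objective Y = objective (\<gamma> Y)"
  unfolding objective_eq lifted_objective_eq by (simp add: inner_diff_Grad)

lemma inner_eq_if_lifted_objective_le:
  assumes "lifted_objective Y \<le> objective (\<gamma> Y)" and "objective (\<gamma> Y) < \<infinity>"
  shows "inner Y Grad = inner (\<gamma> Y) grad"
proof -
  have "\<phi> (\<gamma> Y) \<noteq> \<infinity>" "\<psi> (\<gamma> Y) - \<psi> (\<gamma> X) \<noteq> \<infinity>"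
    using assms(2) psi_diff_not_MInf unfolding objective_eq by auto
  then show ?thesis
    using assms(1) ereal_add_diff_le_add_diff_iff[OF phi_not_MInf psi_diff_not_MInf]
      inner_diff_Grad[of Y] inner_Grad_le[of Y]
    unfolding objective_eq lifted_objective_eq by simp
qed

lemma lifted_objective_Lambda:
  assumes a: "X = \<Lambda> a (\<gamma> X)"
  shows "lifted_objective (\<Lambda> a z) = objective z"
proof -
  have "inner (\<Lambda> a z - X) Grad = inner (\<Lambda> a (z - \<gamma> X)) (\<Lambda> a grad)"
    by (subst (1) a) (simp add: Lambda_diff Grad_eq[OF a])
  then show ?thesis
    unfolding objective_eq lifted_objective_eq
    by (simp add: Lambda_inner S_invariant_gamma_Lambda[OF phi_inv] S_invariant_gamma_Lambda[OF psi_inv])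
qed

abbreviation "optimum \<equiv> (INF y. objective y)"

lemma INF_lifted_objective: "(INF Y. lifted_objective Y) = optimum"
proof (rule antisym)
  obtain a where a: "X = \<Lambda> a (\<gamma> X)" using decomposition by blast
  show "(INF Y. lifted_objective Y) \<le> optimum"
    by (rule INF_mono) (metis lifted_objective_Lambda[OF a] UNIV_I order_refl)
  show "optimum \<le> (INF Y. lifted_objective Y)"
    by (rule INF_mono) (use objective_gamma_le in blast)
qed

lemma mem_Prox_iff: "z \<in> Prox \<phi> \<psi> (\<gamma> X) \<longleftrightarrow> optimum < \<infinity> \<and> objective z \<le> optimum"
  unfolding Prox_def Argmin_def by (auto simp: le_INF_iff)

lemma mem_Prox_comp_iff:
  "Z \<in> Prox (\<phi> \<circ> \<gamma>) (\<psi> \<circ> \<gamma>) X \<longleftrightarrow> optimum < \<infinity> \<and> lifted_objective Z \<le> optimum"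
  unfolding Prox_def Argmin_def INF_lifted_objective[symmetric] by (auto simp: le_INF_iff)

lemma Lambda_mem_Prox_comp_iff:
  "X = \<Lambda> a (\<gamma> X) \<Longrightarrow> \<Lambda> a z \<in> Prox (\<phi> \<circ> \<gamma>) (\<psi> \<circ> \<gamma>) X \<longleftrightarrow> z \<in> Prox \<phi> \<psi> (\<gamma> X)"
  unfolding mem_Prox_iff mem_Prox_comp_iff by (simp only: lifted_objective_Lambda)

lemma mem_Prox_comp_D:
  assumes "Z \<in> Prox (\<phi> \<circ> \<gamma>) (\<psi> \<circ> \<gamma>) X"
  shows "\<gamma> Z \<in> Prox \<phi> \<psi> (\<gamma> X)" and "inner Z Grad = inner (\<gamma> Z) grad"
proof -
  have "optimum < \<infinity>" and le: "lifted_objective Z \<le> optimum" using assms mem_Prox_comp_iff by auto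
  moreover have "objective (\<gamma> Z) \<le> optimum" using objective_gamma_le le by (rule order_trans)
  ultimately show "\<gamma> Z \<in> Prox \<phi> \<psi> (\<gamma> X)" by (simp add: mem_Prox_iff)
  show "inner Z Grad = inner (\<gamma> Z) grad"
  proof (rule inner_eq_if_lifted_objective_le)
    show "lifted_objective Z \<le> objective (\<gamma> Z)" by (rule order_trans[OF le INF_lower[OF UNIV_I]])
    show "objective (\<gamma> Z) < \<infinity>"
      using \<open>objective (\<gamma> Z) \<le> optimum\<close> \<open>optimum < \<infinity>\<close> by (rule le_less_trans)
  qed
qed

lemma S_fixes_gamma_X:
  assumes s: "s \<in> S" and eq: "inner (s (\<gamma> X)) grad = inner (\<gamma> X) grad"
  shows "s (\<gamma> X) = \<gamma> X"
proof -
  obtain c where c: "\<psi> (\<gamma> X) = ereal c"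
    using psi_gamma_X_not_MInf psi_gamma_X_not_PInf by (cases "\<psi> (\<gamma> X)") auto
  have sub: "grad \<in> subdiff \<psi> (\<gamma> X)"
    using Legendre_subdiff_interior[OF psi_Legendre gamma_X_interior] by simp
  have cs: "\<psi> (s (\<gamma> X)) = ereal c" using psi_inv s c unfolding S_invariant_def by simp
  have "grad \<in> subdiff \<psi> (s (\<gamma> X))"
    using sub eq c cs unfolding subdiff_def by (simp add: inner_diff_left)
  from Legendre_level_subgradient_eq[OF psi_Legendre this sub cs c] show ?thesis .
qed

text \<open>The midpoint \<open>M\<close> of \<open>X\<close> and \<open>\<Lambda> b (\<gamma> X)\<close> has \<open>\<gamma> M\<close> on the face exposed by \<open>grad\<close>
  of the convex hull of the orbit of \<open>\<gamma> X\<close>; by strict convexity of \<open>\<psi>\<close> that face is \<open>{\<gamma> X}\<close>,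
  so \<open>M\<close>, \<open>X\<close> and \<open>\<Lambda> b (\<gamma> X)\<close> all have norm \<open>norm (\<gamma> X)\<close>.\<close>

lemma Lambda_gamma_X_eq:
  assumes b: "Grad = \<Lambda> b grad"
  shows "\<Lambda> b (\<gamma> X) = X"
proof -
  define X' where "X' = \<Lambda> b (\<gamma> X)"
  define M where "M = (1 - 1/2) *\<^sub>R X + (1/2) *\<^sub>R X'"
  have gX': "\<gamma> X' = \<gamma> X" unfolding X'_def by (rule gamma_Lambda_gamma)
  have "(1 - 1/2) *\<^sub>R \<gamma> X + (1/2::real) *\<^sub>R \<gamma> X' = \<gamma> X"
    unfolding gX' by (simp add: scaleR_left_distrib[symmetric])
  then have hull: "\<gamma> M \<in> convex hull (orbit S (\<gamma> X))"
    using gamma_convex_combination_in_hull[of "1/2" X X'] unfolding M_def by simp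
  have "inner X' Grad = inner (\<gamma> X) grad" unfolding X'_def b by (rule Lambda_inner)
  then have "inner M Grad = inner (\<gamma> X) grad"
    unfolding M_def using inner_X_Grad by (simp add: inner_add_left algebra_simps)
  then have "inner (\<gamma> X) grad \<le> inner (\<gamma> M) grad" using inner_Grad_le[of M] by simp
  moreover have "inner p grad \<le> inner (\<gamma> X) grad" if "p \<in> orbit S (\<gamma> X)" for p
    using that inner_S_gamma_le[of _ X Grad] gamma_Grad unfolding orbit_def by auto
  ultimately have "\<gamma> M \<in> convex hull {p \<in> orbit S (\<gamma> X). inner p grad = inner (\<gamma> X) grad}"
    using convex_hull_supporting_hyperplane[OF hull] by blast
  moreover have "{p \<in> orbit S (\<gamma> X). inner p grad = inner (\<gamma> X) grad} \<subseteq> {\<gamma> X}"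
    using S_fixes_gamma_X unfolding orbit_def by auto
  ultimately have "\<gamma> M \<in> convex hull {\<gamma> X}" using hull_mono by blast
  then have "norm ((1/2) *\<^sub>R (X + X')) = norm (\<gamma> X)"
    using norm_gamma[of M] by (simp add: M_def scaleR_add_right)
  moreover have "norm X = norm (\<gamma> X)" "norm X' = norm (\<gamma> X)"
    using norm_gamma[of X] norm_gamma[of X'] gX' by simp_all
  ultimately have "X = X'" using norm_midpoint_eq_imp_eq by blast
  then show ?thesis unfolding X'_def by simp
qed

lemma mem_Prox_comp_decomposition:
  assumes "Z \<in> Prox (\<phi> \<circ> \<gamma>) (\<psi> \<circ> \<gamma>) X"
  shows "\<exists>a. X = \<Lambda> a (\<gamma> X) \<and> Z = \<Lambda> a (\<gamma> Z)"
proof -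
  have "inner Z Grad = inner (\<gamma> Z) (\<gamma> Grad)" using mem_Prox_comp_D(2)[OF assms] gamma_Grad by simp
  from simultaneous_decomposition[OF this]
  obtain b where "Z = \<Lambda> b (\<gamma> Z)" "Grad = \<Lambda> b (\<gamma> Grad)" by blast
  then show ?thesis using Lambda_gamma_X_eq gamma_Grad by metis
qed

lemma mem_Prox_comp_iff_decomposition:
  "Z \<in> Prox (\<phi> \<circ> \<gamma>) (\<psi> \<circ> \<gamma>) X \<longleftrightarrow>
    \<gamma> Z \<in> Prox \<phi> \<psi> (\<gamma> X) \<and> (\<exists>a. X = \<Lambda> a (\<gamma> X) \<and> Z = \<Lambda> a (\<gamma> Z))"
  using mem_Prox_comp_D(1) mem_Prox_comp_decomposition Lambda_mem_Prox_comp_iff by metis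

lemma Prox_comp_eq_image:
  "Prox (\<phi> \<circ> \<gamma>) (\<psi> \<circ> \<gamma>) X = {\<Lambda> a z | z a. z \<in> Prox \<phi> \<psi> (\<gamma> X) \<and> a \<in> Aset \<gamma> \<Lambda> X}"
  using mem_Prox_comp_iff_decomposition Lambda_mem_Prox_comp_iff unfolding Aset_def by blast

lemma objective_S_eq:
  assumes "s \<in> S" "inner (s y) grad = inner y grad"
  shows "objective (s y) = objective y"
  using assms phi_inv psi_inv unfolding objective_eq S_invariant_def by (simp add: inner_diff_left)

text \<open>If \<open>Z\<^sub>1, Z\<^sub>2\<close> are minimizers, \<open>\<gamma>\<close> maps their convex combination \<open>M\<close> into the convex
  hull of the orbit of the corresponding combination \<open>w\<close> of \<open>\<gamma> Z\<^sub>1, \<gamma> Z\<^sub>2\<close>, and on the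
  side of \<open>w\<close> where \<open>\<gamma> M\<close> lies that orbit consists of minimizers of the objective.\<close>

lemma convex_combination_mem_Prox_comp:
  assumes cP: "convex (Prox \<phi> \<psi> (\<gamma> X))"
    and Z: "Z1 \<in> Prox (\<phi> \<circ> \<gamma>) (\<psi> \<circ> \<gamma>) X" "Z2 \<in> Prox (\<phi> \<circ> \<gamma>) (\<psi> \<circ> \<gamma>) X"
    and t: "0 \<le> t" "t \<le> 1"
  shows "(1 - t) *\<^sub>R Z1 + t *\<^sub>R Z2 \<in> Prox (\<phi> \<circ> \<gamma>) (\<psi> \<circ> \<gamma>) X"
    (is "?M \<in> _")
proof -
  define w where "w = (1 - t) *\<^sub>R \<gamma> Z1 + t *\<^sub>R \<gamma> Z2"
  have wP: "w \<in> Prox \<phi> \<psi> (\<gamma> X)"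
    unfolding w_def using convexD[OF cP mem_Prox_comp_D(1)[OF Z(1)] mem_Prox_comp_D(1)[OF Z(2)]] t by simp
  have hull: "\<gamma> ?M \<in> convex hull (orbit S w)"
    unfolding w_def by (rule gamma_convex_combination_in_hull[OF t])
  have iM: "inner ?M Grad = inner w grad"
    using mem_Prox_comp_D(2)[OF Z(1)] mem_Prox_comp_D(2)[OF Z(2)] by (simp add: w_def inner_add_left)
  then have "inner w grad \<le> inner (\<gamma> ?M) grad" using inner_Grad_le[of ?M] by simp
  moreover have "inner p grad \<le> inner w grad" if p: "p \<in> orbit S w" for p
  proof -
    obtain s where s: "s \<in> S" "p = s w" using p unfolding orbit_def by blast
    have "inner p grad = (1 - t) * inner (s (\<gamma> Z1)) grad + t * inner (s (\<gamma> Z2)) grad"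
      unfolding s(2) w_def using S_linear[OF s(1)] by (simp add: linear_add linear_scale inner_add_left)
    also have "\<dots> \<le> (1 - t) * inner (\<gamma> Z1) grad + t * inner (\<gamma> Z2) grad"
      using inner_S_gamma_le[OF s(1), of _ Grad] gamma_Grad t by (intro add_mono mult_left_mono) auto
    finally show ?thesis by (simp add: w_def inner_add_left)
  qed
  ultimately have "\<gamma> ?M \<in> convex hull {p \<in> orbit S w. inner p grad = inner w grad}"
    using convex_hull_supporting_hyperplane[OF hull] by blast
  also have "\<dots> \<subseteq> Prox \<phi> \<psi> (\<gamma> X) \<inter> {y. inner y grad = inner w grad}"
  proof (rule hull_minimal)
    show "{p \<in> orbit S w. inner p grad = inner w grad}
        \<subseteq> Prox \<phi> \<psi> (\<gamma> X) \<inter> {y. inner y grad = inner w grad}"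
      using wP objective_S_eq unfolding orbit_def by (auto simp: mem_Prox_iff)
    show "convex (Prox \<phi> \<psi> (\<gamma> X) \<inter> {y. inner y grad = inner w grad})"
      using cP convex_hyperplane[of grad] by (intro convex_Int) (simp_all add: inner_commute)
  qed
  finally have "\<gamma> ?M \<in> Prox \<phi> \<psi> (\<gamma> X)" "inner ?M Grad = inner (\<gamma> ?M) grad"
    using iM by auto
  then show ?thesis
    using lifted_objective_eq_if_inner_eq[of ?M] by (simp add: mem_Prox_iff mem_Prox_comp_iff)
qed

lemma convex_Prox_comp_iff:
  "convex (Prox (\<phi> \<circ> \<gamma>) (\<psi> \<circ> \<gamma>) X) \<longleftrightarrow> convex (Prox \<phi> \<psi> (\<gamma> X))"
proof
  obtain a where a: "X = \<Lambda> a (\<gamma> X)" using decomposition by blast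
  assume "convex (Prox (\<phi> \<circ> \<gamma>) (\<psi> \<circ> \<gamma>) X)"
  then have "convex (\<Lambda> a -` Prox (\<phi> \<circ> \<gamma>) (\<psi> \<circ> \<gamma>) X)"
    by (rule convex_linear_vimage[OF Lambda_linear])
  moreover have "\<Lambda> a -` Prox (\<phi> \<circ> \<gamma>) (\<psi> \<circ> \<gamma>) X = Prox \<phi> \<psi> (\<gamma> X)"
    using Lambda_mem_Prox_comp_iff[OF a] by auto
  ultimately show "convex (Prox \<phi> \<psi> (\<gamma> X))" by simp
next
  assume cP: "convex (Prox \<phi> \<psi> (\<gamma> X))"
  show "convex (Prox (\<phi> \<circ> \<gamma>) (\<psi> \<circ> \<gamma>) X)"
  proof (rule convexI)
    fix Z1 Z2 and u v :: real
    assume "Z1 \<in> Prox (\<phi> \<circ> \<gamma>) (\<psi> \<circ> \<gamma>) X" "Z2 \<in> Prox (\<phi> \<circ> \<gamma>) (\<psi> \<circ> \<gamma>) X"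
      and "0 \<le> u" "0 \<le> v" "u + v = 1"
    moreover have "u = 1 - v" using \<open>u + v = 1\<close> by simp
    ultimately show "u *\<^sub>R Z1 + v *\<^sub>R Z2 \<in> Prox (\<phi> \<circ> \<gamma>) (\<psi> \<circ> \<gamma>) X"
      using convex_combination_mem_Prox_comp[OF cP, of Z1 Z2 v] by simp
  qed
qed

lemma Prox_comp_singleton_iff:
  "(\<exists>Z. Prox (\<phi> \<circ> \<gamma>) (\<psi> \<circ> \<gamma>) X = {Z}) \<longleftrightarrow> (\<exists>z. Prox \<phi> \<psi> (\<gamma> X) = {z})"
proof
  obtain a where a: "X = \<Lambda> a (\<gamma> X)" using decomposition by blast
  assume "\<exists>Z. Prox (\<phi> \<circ> \<gamma>) (\<psi> \<circ> \<gamma>) X = {Z}"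
  then obtain Z where Z: "Prox (\<phi> \<circ> \<gamma>) (\<psi> \<circ> \<gamma>) X = {Z}" by blast
  then have "\<gamma> Z \<in> Prox \<phi> \<psi> (\<gamma> X)" using mem_Prox_comp_D(1) by blast
  then have "\<Lambda> a (\<gamma> Z) = Z" using Lambda_mem_Prox_comp_iff[OF a] Z by blast
  then have "z \<in> Prox \<phi> \<psi> (\<gamma> X) \<longleftrightarrow> \<Lambda> a z = \<Lambda> a (\<gamma> Z)" for z
    using Lambda_mem_Prox_comp_iff[OF a, of z] Z by simp
  then have "Prox \<phi> \<psi> (\<gamma> X) = {\<gamma> Z}" by (auto simp: Lambda_eq_iff)
  then show "\<exists>z. Prox \<phi> \<psi> (\<gamma> X) = {z}" by blast
next
  obtain a where a: "X = \<Lambda> a (\<gamma> X)" using decomposition by blast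
  assume "\<exists>z. Prox \<phi> \<psi> (\<gamma> X) = {z}"
  then obtain z where z: "Prox \<phi> \<psi> (\<gamma> X) = {z}" by blast
  then have convex: "convex (Prox (\<phi> \<circ> \<gamma>) (\<psi> \<circ> \<gamma>) X)" using convex_Prox_comp_iff by simp
  have az: "\<Lambda> a z \<in> Prox (\<phi> \<circ> \<gamma>) (\<psi> \<circ> \<gamma>) X" using Lambda_mem_Prox_comp_iff[OF a] z by simp
  have norm_z: "norm Z = norm z" if "Z \<in> Prox (\<phi> \<circ> \<gamma>) (\<psi> \<circ> \<gamma>) X" for Z
    using mem_Prox_comp_D(1)[OF that] z norm_gamma[of Z] by simp
  have "Z = \<Lambda> a z" if Z: "Z \<in> Prox (\<phi> \<circ> \<gamma>) (\<psi> \<circ> \<gamma>) X" for Z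
  proof (rule norm_midpoint_eq_imp_eq)
    have "(1/2) *\<^sub>R (Z + \<Lambda> a z) \<in> Prox (\<phi> \<circ> \<gamma>) (\<psi> \<circ> \<gamma>) X"
      using convexD[OF convex Z az, of "1/2" "1/2"] by (simp add: scaleR_add_right)
    then show "norm ((1/2) *\<^sub>R (Z + \<Lambda> a z)) = norm z" by (rule norm_z)
  qed (use norm_z[OF Z] Lambda_norm in auto)
  then have "Prox (\<phi> \<circ> \<gamma>) (\<psi> \<circ> \<gamma>) X = {\<Lambda> a z}" using az by blast
  then show "\<exists>Z. Prox (\<phi> \<circ> \<gamma>) (\<psi> \<circ> \<gamma>) X = {Z}" by blast
qed

lemma env_comp_eq: "env (\<phi> \<circ> \<gamma>) (\<psi> \<circ> \<gamma>) X = env \<phi> \<psi> (\<gamma> X)"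
  unfolding env_def by (rule INF_lifted_objective)

end

lemma env_Prox_outside_interior:
  assumes "x \<notin> interior (edom g)" and "\<And>y. f y \<noteq> -\<infinity>"
  shows "env f g x = \<infinity>" and "Prox f g x = {}"
proof -
  have infinite: "(\<lambda>y. f y + bregman g y x) = (\<lambda>y. \<infinity>)"
    using assms by (simp add: bregman_def)
  show "env f g x = \<infinity>" "Prox f g x = {}" unfolding env_def Prox_def Argmin_def infinite by simp_all
qed

theorem theorem6p2:
  fixes S :: "('x::euclidean_space \<Rightarrow> 'x) set"
    and \<gamma> :: "'h::euclidean_space \<Rightarrow> 'x"
    and \<Lambda> :: "'a \<Rightarrow> 'x \<Rightarrow> 'h"
    and \<phi> \<psi> :: "'x \<Rightarrow> ereal"
    and X :: 'h
  assumes sds: "spectral_decomposition_system S \<gamma> \<Lambda>"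
    and phi_proper: "eproper \<phi>" and phi_inv: "S_invariant S \<phi>"
    and psi_Gamma0: "Gamma0 \<psi>" and psi_inv: "S_invariant S \<psi>" and psi_Leg: "Legendre \<psi>"
    and doms: "edom \<phi> \<inter> edom \<psi> \<noteq> {}"
  shows "env (\<phi> \<circ> \<gamma>) (\<psi> \<circ> \<gamma>) X = env \<phi> \<psi> (\<gamma> X)
    \<and> (\<forall>Z. Z \<in> Prox (\<phi> \<circ> \<gamma>) (\<psi> \<circ> \<gamma>) X \<longleftrightarrow>
          \<gamma> Z \<in> Prox \<phi> \<psi> (\<gamma> X) \<and> (\<exists>a. X = \<Lambda> a (\<gamma> X) \<and> Z = \<Lambda> a (\<gamma> Z)))
    \<and> (\<forall>z. \<forall>a\<in>Aset \<gamma> \<Lambda> X. \<Lambda> a z \<in> Prox (\<phi> \<circ> \<gamma>) (\<psi> \<circ> \<gamma>) X \<longleftrightarrow> z \<in> Prox \<phi> \<psi> (\<gamma> X))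
    \<and> Prox (\<phi> \<circ> \<gamma>) (\<psi> \<circ> \<gamma>) X = {\<Lambda> a z | z a. z \<in> Prox \<phi> \<psi> (\<gamma> X) \<and> a \<in> Aset \<gamma> \<Lambda> X}
    \<and> (convex (Prox (\<phi> \<circ> \<gamma>) (\<psi> \<circ> \<gamma>) X) \<longleftrightarrow> convex (Prox \<phi> \<psi> (\<gamma> X)))
    \<and> ((\<exists>Z. Prox (\<phi> \<circ> \<gamma>) (\<psi> \<circ> \<gamma>) X = {Z}) \<longleftrightarrow> (\<exists>z. Prox \<phi> \<psi> (\<gamma> X) = {z}))"
proof -
  interpret spectral_prox S \<gamma> \<Lambda> \<phi> \<psi>
    using sds phi_proper phi_inv psi_inv psi_Leg by unfold_locales
  show ?thesis
  proof (cases "\<gamma> X \<in> interior (edom \<psi>)")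
    case True
    interpret spectral_prox_at S \<gamma> \<Lambda> \<phi> \<psi> X using True by unfold_locales
    show ?thesis
      by (intro conjI allI ballI env_comp_eq mem_Prox_comp_iff_decomposition Lambda_mem_Prox_comp_iff
          Prox_comp_eq_image convex_Prox_comp_iff Prox_comp_singleton_iff) (simp add: Aset_def)
  next
    case False
    then have "X \<notin> interior (edom (\<psi> \<circ> \<gamma>))" using interior_edom_comp_iff[OF psi_inv] by blast
    with False show ?thesis
      using env_Prox_outside_interior[of _ _ \<phi>] env_Prox_outside_interior[of _ _ "\<phi> \<circ> \<gamma>"]
        phi_not_MInf by simp
  qed
qed

end
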